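(* Let $d_0,d_1,d_2\in\mathbb{C}$ and put $\alpha_0=1-2d_0+d_1+d_2$, $\alpha_1=1+d_0-2d_1+d_2$, $\alpha_2=1+d_0+d_1-2d_2$. Let $\tau_0,\tau_1,\tau_2$ be functions of one variable and $G_i(t_1,t_2)=(2t_2)^{d_i/2}\,\tau_i\big(t_1/\sqrt{2t_2}\big)$ ($i=0,1,2$). Then the system $$\Big(D_x^2-xD_x-\frac{\alpha_i-\alpha_{i+1}}{3}\Big)\tau_i\cdot\tau_{i+1}=0\quad(i=0,1,2)$$ is equivalent to the system $(D_{t_1}^2+D_{t_2})\,G_i\cdot G_{i+1}=0$ ($i=0,1,2$).
   Context: Indices mod 3. Hirota operators: $P(D)\,F\cdot G=P(\partial_y)(F(t+y)G(t-y))|_{y=0}$ in the respective variables, e.g. $D_xF\cdot G=F'G-FG'$, $D_x^2F\cdot G=F''G-2F'G'+FG''$. *)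

theory Defs
  imports "HOL-Analysis.Analysis"
begin

definition dv :: "(real \<Rightarrow> complex) \<Rightarrow> real \<Rightarrow> complex" where
  "dv F x = vector_derivative F (at x)"

definition hirota1 :: "(real \<Rightarrow> complex) \<Rightarrow> (real \<Rightarrow> complex) \<Rightarrow> real \<Rightarrow> complex" where
  "hirota1 F G x = dv F x * G x - F x * dv G x"

definition hirota2 :: "(real \<Rightarrow> complex) \<Rightarrow> (real \<Rightarrow> complex) \<Rightarrow> real \<Rightarrow> complex" where
  "hirota2 F G x = dv (dv F) x * G x - 2 * dv F x * dv G x + F x * dv (dv G) x"

definition alpha :: "(nat \<Rightarrow> complex) \<Rightarrow> nat \<Rightarrow> complex" where
  "alpha d i = 1 + d 0 + d 1 + d 2 - 3 * d i"

definition Gfun :: "(nat \<Rightarrow> complex) \<Rightarrow> (nat \<Rightarrow> real \<Rightarrow> complex) \<Rightarrow> nat \<Rightarrow> real \<Rightarrow> real \<Rightarrow> complex" where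
  "Gfun d \<tau> i t1 t2 = (complex_of_real (2 * t2)) powr (d i / 2) * \<tau> i (t1 / sqrt (2 * t2))"

end

theory Submission
  imports Defs
begin

(* Each G_i is self-similar in the variable x = t1 / sqrt (2 t2): differentiating in t1 only
   divides by sqrt (2 t2), while differentiating in t2 acts as (d_i - x d/dx) / (2 t2).
   Hence (D_t1^2 + D_t2) G_i . G_j equals (2 t2)^((d_i + d_j)/2 - 1) times
   (D_x^2 - x D_x - (d_j - d_i)) tau_i . tau_j evaluated at x, and (alpha_i - alpha_j)/3 = d_j - d_i.
   Conversely, at t2 = 1/2 the similarity variable is t1 itself and the prefactor is 1. *)

definition hirota_heat ::
    "(real \<Rightarrow> real \<Rightarrow> complex) \<Rightarrow> (real \<Rightarrow> real \<Rightarrow> complex) \<Rightarrow> real \<Rightarrow> real \<Rightarrow> complex" where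
  "hirota_heat F G t1 t2 =
     hirota2 (\<lambda>s. F s t2) (\<lambda>s. G s t2) t1 + hirota1 (\<lambda>s. F t1 s) (\<lambda>s. G t1 s) t2"

definition hirota_hermite ::
    "complex \<Rightarrow> (real \<Rightarrow> complex) \<Rightarrow> (real \<Rightarrow> complex) \<Rightarrow> real \<Rightarrow> complex" where
  "hirota_hermite c F G x = hirota2 F G x - of_real x * hirota1 F G x - c * (F x * G x)"

lemma has_vector_derivative_compose_divide:
  fixes f :: "real \<Rightarrow> 'a::real_normed_field"
  assumes "(f has_vector_derivative D) (at (x / k))"
  shows "((\<lambda>s. f (s / k)) has_vector_derivative D / of_real k) (at x)"
proof -
  have "((\<lambda>s. s / k) has_vector_derivative 1 / k) (at x)"
    by (intro has_vector_derivative_divide has_vector_derivative_id)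
  from vector_diff_chain_at[OF this assms] show ?thesis
    by (simp add: o_def scaleR_conv_of_real divide_inverse_commute)
qed

lemma has_vector_derivative_of_real_powr:
  fixes a :: complex
  assumes "t > 0"
  shows "((\<lambda>s. of_real s powr a) has_vector_derivative a * of_real t powr a / of_real t) (at t)"
proof -
  have "of_real t \<notin> \<real>\<^sub>\<le>\<^sub>0" using assms by (simp add: complex_nonpos_Reals_iff)
  from has_vector_derivative_real_field[OF has_field_derivative_powr[OF this]]
  show ?thesis using assms by (simp add: powr_diff)
qed

lemma has_vector_derivative_Gfun_t1:
  assumes "t2 > 0" and "\<tau> i differentiable (at (t1 / sqrt (2 * t2)))"
  shows "((\<lambda>s. Gfun d \<tau> i s t2) has_vector_derivative
           Gfun d (\<lambda>k. dv (\<tau> k)) i t1 t2 / of_real (sqrt (2 * t2))) (at t1)"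
proof -
  have "(\<tau> i has_vector_derivative dv (\<tau> i) (t1 / sqrt (2 * t2))) (at (t1 / sqrt (2 * t2)))"
    using assms(2) by (simp add: dv_def vector_derivative_works)
  from has_vector_derivative_mult_right[OF has_vector_derivative_compose_divide[OF this]]
  show ?thesis by (simp add: Gfun_def)
qed

lemma dv_Gfun_t1:
  assumes "t2 > 0" and "\<And>x. \<tau> i differentiable (at x)"
  shows "dv (\<lambda>s. Gfun d \<tau> i s t2) = (\<lambda>s. Gfun d (\<lambda>k. dv (\<tau> k)) i s t2 / of_real (sqrt (2 * t2)))"
  using has_vector_derivative_Gfun_t1[where \<tau>=\<tau> and i=i, OF assms] unfolding dv_def
  by (auto intro!: vector_derivative_at)

lemma dv2_Gfun_t1:
  assumes "t2 > 0" and "\<And>x. \<tau> i differentiable (at x)" and "\<And>x. dv (\<tau> i) differentiable (at x)"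
  shows "dv (dv (\<lambda>s. Gfun d \<tau> i s t2)) t1 = Gfun d (\<lambda>k. dv (dv (\<tau> k))) i t1 t2 / of_real (2 * t2)"
proof -
  have "((\<lambda>s. Gfun d (\<lambda>k. dv (\<tau> k)) i s t2 / of_real (sqrt (2 * t2))) has_vector_derivative
          Gfun d (\<lambda>k. dv (dv (\<tau> k))) i t1 t2 / of_real (sqrt (2 * t2)) / of_real (sqrt (2 * t2))) (at t1)"
    by (intro has_vector_derivative_divide has_vector_derivative_Gfun_t1[where \<tau>="\<lambda>k. dv (\<tau> k)"] assms)
  moreover have "of_real (sqrt (2 * t2)) * of_real (sqrt (2 * t2)) = (of_real (2 * t2) :: complex)"
    using assms(1) by (simp flip: of_real_mult)
  ultimately show ?thesis
    unfolding dv_Gfun_t1[where \<tau>=\<tau> and i=i, OF assms(1,2)] by (simp add: dv_def vector_derivative_at)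
qed

lemma has_vector_derivative_Gfun_t2:
  assumes "t2 > 0" and "\<tau> i differentiable (at (t1 / sqrt (2 * t2)))"
  shows "((\<lambda>s. Gfun d \<tau> i t1 s) has_vector_derivative
           (d i * Gfun d \<tau> i t1 t2 - of_real (t1 / sqrt (2 * t2)) * Gfun d (\<lambda>k. dv (\<tau> k)) i t1 t2)
             / of_real (2 * t2)) (at t2)"
proof -
  let ?x = "t1 / sqrt (2 * t2)"
  have "((\<lambda>s. of_real (2 * s) powr (d i / 2)) has_vector_derivative
          d i * of_real (2 * t2) powr (d i / 2) / of_real (2 * t2)) (at t2)"
    using vector_diff_chain_at[OF has_vector_derivative_mult_right[OF has_vector_derivative_id]
        has_vector_derivative_of_real_powr, of 2 t2 "d i / 2"] assms(1)
    by (simp add: o_def scaleR_conv_of_real)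
  moreover have "((\<lambda>s. \<tau> i (t1 / sqrt (2 * s))) has_vector_derivative
                    - of_real (?x / (2 * t2)) * dv (\<tau> i) ?x) (at t2)"
  proof -
    have "((\<lambda>s. t1 / sqrt (2 * s)) has_vector_derivative - ?x / (2 * t2)) (at t2)"
      using assms(1) unfolding has_real_derivative_iff_has_vector_derivative[symmetric]
      by (auto intro!: derivative_eq_intros simp: field_simps real_sqrt_mult)
    moreover have "(\<tau> i has_vector_derivative dv (\<tau> i) ?x) (at ?x)"
      using assms(2) by (simp add: dv_def vector_derivative_works)
    ultimately show ?thesis
      using vector_diff_chain_at by (fastforce simp: o_def scaleR_conv_of_real)
  qed
  ultimately show ?thesis
    using assms(1) unfolding Gfun_def
    by (auto intro: has_vector_derivative_mult[THEN has_vector_derivative_eq_rhs] simp: field_simps)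
qed

lemma dv_Gfun_t2:
  assumes "t2 > 0" and "\<tau> i differentiable (at (t1 / sqrt (2 * t2)))"
  shows "dv (\<lambda>s. Gfun d \<tau> i t1 s) t2 =
           (d i * Gfun d \<tau> i t1 t2 - of_real (t1 / sqrt (2 * t2)) * Gfun d (\<lambda>k. dv (\<tau> k)) i t1 t2)
             / of_real (2 * t2)"
  using vector_derivative_at[OF has_vector_derivative_Gfun_t2[where \<tau>=\<tau>, OF assms]]
  by (simp only: dv_def)

lemma hirota_heat_Gfun:
  assumes "t2 > 0"
    and "\<And>x. \<tau> i differentiable (at x)" "\<And>x. dv (\<tau> i) differentiable (at x)"
    and "\<And>x. \<tau> j differentiable (at x)" "\<And>x. dv (\<tau> j) differentiable (at x)"
  shows "hirota_heat (Gfun d \<tau> i) (Gfun d \<tau> j) t1 t2 =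
           of_real (2 * t2) powr (d i / 2) * of_real (2 * t2) powr (d j / 2) / of_real (2 * t2)
             * hirota_hermite (d j - d i) (\<tau> i) (\<tau> j) (t1 / sqrt (2 * t2))"
proof -
  define x where "x = t1 / sqrt (2 * t2)"
  define c :: complex where "c = of_real (sqrt (2 * t2))"
  define P where "P k = of_real (2 * t2) powr (d k / 2)" for k
  have c_nonzero: "c \<noteq> 0" and c_square: "of_real (2 * t2) = c * c"
    using assms(1) by (simp_all add: c_def flip: of_real_mult)
  have Gfun_value: "Gfun d \<tau> k t1 t2 = P k * \<tau> k x" for k
    by (simp only: Gfun_def P_def x_def)
  have derivs: "dv (\<lambda>s. Gfun d \<tau> k s t2) t1 = P k * dv (\<tau> k) x / c"
      "dv (dv (\<lambda>s. Gfun d \<tau> k s t2)) t1 = P k * dv (dv (\<tau> k)) x / (c * c)"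
      "dv (Gfun d \<tau> k t1) t2 = P k * (d k * \<tau> k x - of_real x * dv (\<tau> k) x) / (c * c)"
    if "\<And>x. \<tau> k differentiable (at x)" "\<And>x. dv (\<tau> k) differentiable (at x)" for k
  proof -
    show "dv (\<lambda>s. Gfun d \<tau> k s t2) t1 = P k * dv (\<tau> k) x / c"
      unfolding dv_Gfun_t1[where \<tau>=\<tau>, OF assms(1) that(1)] by (simp only: Gfun_def P_def x_def c_def)
    show "dv (dv (\<lambda>s. Gfun d \<tau> k s t2)) t1 = P k * dv (dv (\<tau> k)) x / (c * c)"
      unfolding dv2_Gfun_t1[where \<tau>=\<tau>, OF assms(1) that] c_square[symmetric]
      by (simp only: Gfun_def P_def x_def c_def)
    show "dv (Gfun d \<tau> k t1) t2 = P k * (d k * \<tau> k x - of_real x * dv (\<tau> k) x) / (c * c)"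
      unfolding dv_Gfun_t2[where \<tau>=\<tau>, OF assms(1) that(1)] c_square[symmetric]
      by (simp add: Gfun_def P_def x_def c_def algebra_simps)
  qed
  show ?thesis
    unfolding hirota_heat_def hirota_hermite_def hirota2_def hirota1_def
      derivs[OF assms(2,3)] derivs[OF assms(4,5)] Gfun_value
    unfolding x_def[symmetric] P_def[symmetric]
    unfolding c_square
    using c_nonzero by (simp add: field_simps)
qed

lemma hirota_hermite_iff_hirota_heat_Gfun:
  assumes "\<And>x. \<tau> i differentiable (at x)" "\<And>x. dv (\<tau> i) differentiable (at x)"
    and "\<And>x. \<tau> j differentiable (at x)" "\<And>x. dv (\<tau> j) differentiable (at x)"
  shows "(\<forall>x. hirota_hermite (d j - d i) (\<tau> i) (\<tau> j) x = 0)
     \<longleftrightarrow> (\<forall>t1 t2. t2 > 0 \<longrightarrow> hirota_heat (Gfun d \<tau> i) (Gfun d \<tau> j) t1 t2 = 0)"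
proof
  assume "\<forall>x. hirota_hermite (d j - d i) (\<tau> i) (\<tau> j) x = 0"
  then show "\<forall>t1 t2. t2 > 0 \<longrightarrow> hirota_heat (Gfun d \<tau> i) (Gfun d \<tau> j) t1 t2 = 0"
    using hirota_heat_Gfun[where \<tau>=\<tau>, OF _ assms] by simp
next
  assume heat: "\<forall>t1 t2. t2 > 0 \<longrightarrow> hirota_heat (Gfun d \<tau> i) (Gfun d \<tau> j) t1 t2 = 0"
  show "\<forall>x. hirota_hermite (d j - d i) (\<tau> i) (\<tau> j) x = 0"
  proof
    fix x :: real
    have "hirota_heat (Gfun d \<tau> i) (Gfun d \<tau> j) x (1 / 2) = 0"
      using heat by simp
    moreover have "(1 / 2 :: real) > 0" by simp
    note hirota_heat_Gfun[where \<tau>=\<tau>, OF this assms]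
    ultimately show "hirota_hermite (d j - d i) (\<tau> i) (\<tau> j) x = 0" by simp
  qed
qed

theorem proposition5p2:
  fixes d :: "nat \<Rightarrow> complex" and \<tau> :: "nat \<Rightarrow> real \<Rightarrow> complex"
  assumes diff1: "\<And>i x. i < 3 \<Longrightarrow> \<tau> i differentiable (at x)"
      and diff2: "\<And>i x. i < 3 \<Longrightarrow> dv (\<tau> i) differentiable (at x)"
  shows "(\<forall>i<3. \<forall>x::real.
            hirota2 (\<tau> i) (\<tau> ((i + 1) mod 3)) x
            - complex_of_real x * hirota1 (\<tau> i) (\<tau> ((i + 1) mod 3)) x
            - (alpha d i - alpha d ((i + 1) mod 3)) / 3 * (\<tau> i x * \<tau> ((i + 1) mod 3) x) = 0)
     \<longleftrightarrow>
         (\<forall>i<3. \<forall>t1 t2::real. t2 > 0 \<longrightarrow>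
            hirota2 (\<lambda>s. Gfun d \<tau> i s t2) (\<lambda>s. Gfun d \<tau> ((i + 1) mod 3) s t2) t1
            + hirota1 (\<lambda>s. Gfun d \<tau> i t1 s) (\<lambda>s. Gfun d \<tau> ((i + 1) mod 3) t1 s) t2 = 0)"
proof -
  have alpha_diff: "(alpha d i - alpha d j) / 3 = d j - d i" for i j
    by (simp add: alpha_def)
  have "(\<forall>x. hirota_hermite ((alpha d i - alpha d j) / 3) (\<tau> i) (\<tau> j) x = 0)
     \<longleftrightarrow> (\<forall>t1 t2. t2 > 0 \<longrightarrow> hirota_heat (Gfun d \<tau> i) (Gfun d \<tau> j) t1 t2 = 0)"
    if "i < 3" "j < 3" for i j
    unfolding alpha_diff
    by (rule hirota_hermite_iff_hirota_heat_Gfun[where \<tau>=\<tau>,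
          OF diff1[OF that(1)] diff2[OF that(1)] diff1[OF that(2)] diff2[OF that(2)]])
  then show ?thesis
    unfolding hirota_hermite_def hirota_heat_def by simp
qed

end
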